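(* Let $Q^n,Q^{n-1}$ be grid functions satisfying the boundary conditions with symmetric trace-free values, and $\overline P_{ijk}=\frac32P(Q^n_{ijk})-\frac12P(Q^{n-1}_{ijk})$. Define, for matrix-valued grid functions $Q$, $\mathbb{A}(Q)_{ijk}=\frac{Q_{ijk}}{\Delta t}-\frac{ML_1}{2}\Delta_hQ_{ijk}+\frac M2\big(\overline P_{ijk}:Q_{ijk}\big)\overline P_{ijk}-M\frac{L_2+L_3}{4}\alpha_h(Q)_{ijk}$. Then $\mathbb{A}$ is symmetric and positive definite on the space $V$ of matrix-valued grid functions satisfying the boundary conditions with symmetric trace-free values, i.e. $\langle\mathbb{A}(Q^1),Q^2\rangle_h=\langle Q^1,\mathbb{A}(Q^2)\rangle_h$ for all $Q^1,Q^2\in V$, and $\langle\mathbb{A}(Q),Q\rangle_h>0$ for all $Q\in V$, $Q\neq0$.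
   Context: Parameters: $a,b\in\mathbb{R}$, $c,L_1,L_2,L_3,M>0$, $\Delta t>0$, and $A_0>0$ such that $\inf\{\frac a2\operatorname{tr}(Q^2)-\frac b3\operatorname{tr}(Q^3)+\frac c4(\operatorname{tr}(Q^2))^2+A_0:\ Q\in\mathbb{R}^{3\times3}\text{ symmetric}\}>0$. For symmetric $Q$: $r(Q)=\sqrt{2(\frac a2\operatorname{tr}(Q^2)-\frac b3\operatorname{tr}(Q^3)+\frac c4(\operatorname{tr}(Q^2))^2+A_0)}$, $S(Q)=aQ-b(Q^2-\frac13\operatorname{tr}(Q^2)I)+c\operatorname{tr}(Q^2)Q$, $P(Q)=S(Q)/r(Q)$; $A:B=\sum_{i,j}A_{ij}B_{ij}$. Grid: $N\in\mathbb{N}$, $h=1/(N+1)$. Grid functions are families $(f_{ijk})_{(i,j,k)\in\mathbb{Z}^3}$ of real $3\times3$ matrices; the boundary conditions mean $f_{ijk}=0$ whenever $(i,j,k)\notin\{1,\dots,N\}^3$. $D^\pm_1f_{ijk}=\pm(f_{i\pm1,j,k}-f_{ijk})/h$, $D^c_1f_{ijk}=(f_{i+1,j,k}-f_{i-1,j,k})/(2h)$, analogously in directions 2, 3. $\Delta_hf=\sum_\alpha D^-_\alpha D^+_\alpha f$, $\alpha_h(Q)_{ws}=\sum_\beta[D^c_wD^c_\beta Q_{s\beta}+D^c_sD^c_\beta Q_{w\beta}]-\frac23\sum_{\beta,\gamma}D^c_\beta D^c_\gamma Q_{\beta\gamma}\delta_{ws}$. $\langle A,B\rangle_h=h^3\sum_{i,j,k=0}^{N+1}A_{ijk}:B_{ijk}$.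 *)

theory Defs
  imports "HOL-Analysis.Analysis"
begin

text \<open>3x3 real matrices are real^3^3; grid points are int^3; grid functions map
  grid points to matrices. Directions 1,2,3 of the paper are the three elements of type 3.\<close>

type_synonym mat3 = "real^3^3"
type_synonym gridfun = "int^3 \<Rightarrow> mat3"

definition frob :: "mat3 \<Rightarrow> mat3 \<Rightarrow> real" where
  "frob A B = (\<Sum>i\<in>UNIV. \<Sum>j\<in>UNIV. A $ i $ j * B $ i $ j)"

definition symm :: "mat3 \<Rightarrow> bool" where
  "symm Q \<longleftrightarrow> transpose Q = Q"

definition bulk_energy :: "real \<Rightarrow> real \<Rightarrow> real \<Rightarrow> real \<Rightarrow> mat3 \<Rightarrow> real" where
  "bulk_energy a b c A0 Q =
     a / 2 * trace (Q ** Q) - b / 3 * trace (Q ** Q ** Q) + c / 4 * (trace (Q ** Q))^2 + A0"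

definition rQ :: "real \<Rightarrow> real \<Rightarrow> real \<Rightarrow> real \<Rightarrow> mat3 \<Rightarrow> real" where
  "rQ a b c A0 Q = sqrt (2 * bulk_energy a b c A0 Q)"

definition SQ :: "real \<Rightarrow> real \<Rightarrow> real \<Rightarrow> mat3 \<Rightarrow> mat3" where
  "SQ a b c Q = a *\<^sub>R Q - b *\<^sub>R (Q ** Q - (trace (Q ** Q) / 3) *\<^sub>R mat 1)
               + (c * trace (Q ** Q)) *\<^sub>R Q"

definition PQ :: "real \<Rightarrow> real \<Rightarrow> real \<Rightarrow> real \<Rightarrow> mat3 \<Rightarrow> mat3" where
  "PQ a b c A0 Q = (1 / rQ a b c A0 Q) *\<^sub>R SQ a b c Q"

definition meshsize :: "nat \<Rightarrow> real" where
  "meshsize N = 1 / (real N + 1)"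

definition interior_pts :: "nat \<Rightarrow> (int^3) set" where
  "interior_pts N = {p. \<forall>k. 1 \<le> p $ k \<and> p $ k \<le> int N}"

definition closed_pts :: "nat \<Rightarrow> (int^3) set" where
  "closed_pts N = {p. \<forall>k. 0 \<le> p $ k \<and> p $ k \<le> int N + 1}"

definition bc :: "nat \<Rightarrow> gridfun \<Rightarrow> bool" where
  "bc N f \<longleftrightarrow> (\<forall>p. p \<notin> interior_pts N \<longrightarrow> f p = 0)"

definition Vspace :: "nat \<Rightarrow> gridfun set" where
  "Vspace N = {f. bc N f \<and> (\<forall>p. symm (f p) \<and> trace (f p) = 0)}"

definition Dp :: "nat \<Rightarrow> 3 \<Rightarrow> (int^3 \<Rightarrow> 'a::real_vector) \<Rightarrow> int^3 \<Rightarrow> 'a" where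
  "Dp N \<alpha> f p = (1 / meshsize N) *\<^sub>R (f (p + axis \<alpha> 1) - f p)"

definition Dm :: "nat \<Rightarrow> 3 \<Rightarrow> (int^3 \<Rightarrow> 'a::real_vector) \<Rightarrow> int^3 \<Rightarrow> 'a" where
  "Dm N \<alpha> f p = (1 / meshsize N) *\<^sub>R (f p - f (p - axis \<alpha> 1))"

definition Dc :: "nat \<Rightarrow> 3 \<Rightarrow> (int^3 \<Rightarrow> 'a::real_vector) \<Rightarrow> int^3 \<Rightarrow> 'a" where
  "Dc N \<alpha> f p = (1 / (2 * meshsize N)) *\<^sub>R (f (p + axis \<alpha> 1) - f (p - axis \<alpha> 1))"

definition lap_h :: "nat \<Rightarrow> gridfun \<Rightarrow> gridfun" where
  "lap_h N f = (\<lambda>p. \<Sum>\<alpha>\<in>UNIV. Dm N \<alpha> (Dp N \<alpha> f) p)"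

definition alpha_h :: "nat \<Rightarrow> gridfun \<Rightarrow> gridfun" where
  "alpha_h N Q = (\<lambda>p. \<chi> w s.
      (\<Sum>\<beta>\<in>UNIV. Dc N w (Dc N \<beta> (\<lambda>q. Q q $ s $ \<beta>)) p
                 + Dc N s (Dc N \<beta> (\<lambda>q. Q q $ w $ \<beta>)) p)
      - 2 / 3 * (\<Sum>\<beta>\<in>UNIV. \<Sum>\<gamma>\<in>UNIV. Dc N \<beta> (Dc N \<gamma> (\<lambda>q. Q q $ \<beta> $ \<gamma>)) p)
        * (if w = s then 1 else 0))"

definition ip_h :: "nat \<Rightarrow> gridfun \<Rightarrow> gridfun \<Rightarrow> real" where
  "ip_h N A B = meshsize N ^ 3 * (\<Sum>p\<in>closed_pts N. frob (A p) (B p))"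

definition Pbar :: "real \<Rightarrow> real \<Rightarrow> real \<Rightarrow> real \<Rightarrow> gridfun \<Rightarrow> gridfun \<Rightarrow> gridfun" where
  "Pbar a b c A0 Qn Qnm1 = (\<lambda>p. (3/2) *\<^sub>R PQ a b c A0 (Qn p) - (1/2) *\<^sub>R PQ a b c A0 (Qnm1 p))"

definition opA :: "real \<Rightarrow> real \<Rightarrow> real \<Rightarrow> real \<Rightarrow> real \<Rightarrow> real \<Rightarrow> real \<Rightarrow> real \<Rightarrow> real
                  \<Rightarrow> nat \<Rightarrow> gridfun \<Rightarrow> gridfun \<Rightarrow> gridfun \<Rightarrow> gridfun" where
  "opA a b c A0 L1 L2 L3 M dt N Qn Qnm1 Q = (\<lambda>p.
      let P = Pbar a b c A0 Qn Qnm1 p in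
      (1 / dt) *\<^sub>R Q p - (M * L1 / 2) *\<^sub>R lap_h N Q p
      + (M / 2 * frob P (Q p)) *\<^sub>R P
      - (M * (L2 + L3) / 4) *\<^sub>R alpha_h N Q p)"

end

theory Submission
  imports Defs "HOL-Library.Groups_Big_Fun"
begin

(* All grid functions involved vanish off a finite set and sums over the grid are invariant
   under translation, so difference operators move across the pairing by summation by parts:
   D^-_a is adjoint to -D^+_a and D^c_a to -D^c_a.  Writing alpha_h(Q) = G + G^T - (2/3) tr(G) I,
   where G is the discrete gradient of the discrete divergence of Q, its pairing with a symmetric
   trace-free Q2 is 2 G : Q2, and one more summation by parts turns h^-3 <A(Q1), Q2>_h into
     <Q1, Q2>/dt + (M L1/2) sum_a <D^+_a Q1, D^+_a Q2> + (M/2) sum (P:Q1)(P:Q2)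
       + (M (L2+L3)/2) <div Q1, div Q2>.
   This form is symmetric; on the diagonal every term is nonnegative and the first one is
   positive for Q <> 0. *)

definition finite_support :: "('a \<Rightarrow> 'b::zero) \<Rightarrow> bool" where
  "finite_support f \<longleftrightarrow> finite {x. f x \<noteq> 0}"

lemma finite_support_dominated:
  assumes "finite_support g" and "\<And>x. g x = 0 \<Longrightarrow> f x = 0"
  shows "finite_support f"
proof -
  have "{x. f x \<noteq> 0} \<subseteq> {x. g x \<noteq> 0}" using assms(2) by blast
  then show ?thesis using assms(1) unfolding finite_support_def by (rule finite_subset)
qed

lemma finite_support_diff:
  fixes f g :: "'a \<Rightarrow> 'b::group_add"
  assumes "finite_support f" and "finite_support g"
  shows "finite_support (\<lambda>x. f x - g x)"
proof -
  have "{x. f x - g x \<noteq> 0} \<subseteq> {x. f x \<noteq> 0} \<union> {x. g x \<noteq> 0}" by auto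
  then show ?thesis using assms unfolding finite_support_def by (simp add: finite_subset)
qed

lemma finite_support_shift:
  fixes f :: "'a::group_add \<Rightarrow> 'b::zero"
  assumes "finite_support f"
  shows "finite_support (\<lambda>x. f (x + e))"
proof -
  have "{x. f (x + e) \<noteq> 0} = (\<lambda>x. x - e) ` {x. f x \<noteq> 0}"
    by (auto intro: image_eqI[where x = "_ + e"])
  then show ?thesis using assms unfolding finite_support_def by simp
qed

lemma Sum_any_shift:
  fixes f :: "'a::group_add \<Rightarrow> 'b::comm_monoid_add"
  shows "Sum_any (\<lambda>x. f (x + e)) = Sum_any f"
proof -
  have "bij (\<lambda>x. x + e)" by (rule bijI) (auto intro: injI image_eqI[where x = "_ - e"])
  then show ?thesis by (rule Sum_any.reindex_cong[symmetric]) (simp add: o_def)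
qed

lemma Sum_any_eq_sum_support:
  assumes "finite_support g" and "\<And>x. g x = 0 \<Longrightarrow> f x = 0"
  shows "Sum_any f = sum f {x. g x \<noteq> 0}"
  using assms unfolding finite_support_def by (intro Sum_any.expand_superset) auto

lemma Sum_any_diff:
  fixes f g :: "'a \<Rightarrow> 'b::ab_group_add"
  assumes "finite_support f" and "finite_support g"
  shows "Sum_any (\<lambda>x. f x - g x) = Sum_any f - Sum_any g"
proof -
  let ?A = "{x. f x \<noteq> 0} \<union> {x. g x \<noteq> 0}"
  have A: "finite ?A" using assms by (simp add: finite_support_def)
  have "Sum_any (\<lambda>x. f x - g x) = (\<Sum>x\<in>?A. f x - g x)"
    by (rule Sum_any.expand_superset[OF A]) auto
  also have "\<dots> = Sum_any f - Sum_any g"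
    by (simp add: sum_subtractf Sum_any.expand_superset[OF A])
  finally show ?thesis .
qed

lemma Sum_any_sum:
  fixes F :: "'i \<Rightarrow> 'a \<Rightarrow> 'b::comm_monoid_add"
  assumes "finite I" and "\<And>i. i \<in> I \<Longrightarrow> finite_support (F i)"
  shows "Sum_any (\<lambda>x. \<Sum>i\<in>I. F i x) = (\<Sum>i\<in>I. Sum_any (F i))"
proof -
  let ?A = "\<Union>i\<in>I. {x. F i x \<noteq> 0}"
  have A: "finite ?A" using assms by (simp add: finite_support_def)
  have "Sum_any (\<lambda>x. \<Sum>i\<in>I. F i x) = (\<Sum>x\<in>?A. \<Sum>i\<in>I. F i x)"
    by (rule Sum_any.expand_superset[OF A]) (auto elim: sum.not_neutral_contains_not_neutral)
  also have "\<dots> = (\<Sum>i\<in>I. \<Sum>x\<in>?A. F i x)" by (rule sum.swap)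
  also have "\<dots> = (\<Sum>i\<in>I. Sum_any (F i))"
    by (rule sum.cong[OF refl], rule Sum_any.expand_superset[OF A, symmetric]) auto
  finally show ?thesis .
qed

lemma Sum_any_nonneg:
  fixes f :: "'a \<Rightarrow> 'b::ordered_comm_monoid_add"
  assumes "\<And>x. 0 \<le> f x"
  shows "0 \<le> Sum_any f"
  using assms by (simp add: Sum_any.expand_set sum_nonneg)

lemma Sum_any_pos:
  fixes f :: "'a \<Rightarrow> 'b::ordered_comm_monoid_add"
  assumes "finite_support f" and "\<And>x. 0 \<le> f x" and "0 < f y"
  shows "0 < Sum_any f"
  using assms unfolding Sum_any.expand_set finite_support_def
  by (intro sum_pos2[of _ y]) auto

lemma Sum_any_cmult:
  fixes f :: "'a \<Rightarrow> 'b::semiring_no_zero_divisors"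
  shows "Sum_any (\<lambda>x. c * f x) = c * Sum_any f"
proof (cases "c = 0")
  case False
  then have "{x. c * f x \<noteq> 0} = {x. f x \<noteq> 0}" by auto
  then show ?thesis by (simp add: Sum_any.expand_set sum_distrib_left)
qed simp

lemma Sum_any_minus:
  fixes f :: "'a \<Rightarrow> 'b::ab_group_add"
  shows "Sum_any (\<lambda>x. - f x) = - Sum_any f"
  by (simp add: Sum_any.expand_set sum_negf)

lemma Sum_any_inner_self_pos:
  fixes f :: "'a \<Rightarrow> 'b::real_inner"
  assumes "finite_support f" and "f \<noteq> (\<lambda>_. 0)"
  shows "0 < Sum_any (\<lambda>x. f x \<bullet> f x)"
proof -
  obtain y where "f y \<noteq> 0" using assms(2) by auto
  then show ?thesis
    by (intro Sum_any_pos[where y = y] finite_support_dominated[OF assms(1)]) simp_all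
qed

lemma Sum_any_backward_difference_inner:
  fixes f g :: "'a::group_add \<Rightarrow> 'b::real_inner"
  assumes g: "finite_support g"
  shows "Sum_any (\<lambda>x. (f x - f (x - e)) \<bullet> g x) = Sum_any (\<lambda>x. f x \<bullet> (g x - g (x + e)))"
proof -
  have g_shift: "finite_support (\<lambda>x. g (x + e))" using g by (rule finite_support_shift)
  have "Sum_any (\<lambda>x. (f x - f (x - e)) \<bullet> g x)
      = Sum_any (\<lambda>x. f x \<bullet> g x) - Sum_any (\<lambda>x. f (x - e) \<bullet> g x)"
    unfolding inner_diff_left
    by (intro Sum_any_diff finite_support_dominated[OF g]) simp_all
  also have "Sum_any (\<lambda>x. f (x - e) \<bullet> g x) = Sum_any (\<lambda>x. f x \<bullet> g (x + e))"
    using Sum_any_shift[of "\<lambda>x. f (x - e) \<bullet> g x" e] by simp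
  also have "Sum_any (\<lambda>x. f x \<bullet> g x) - \<dots> = Sum_any (\<lambda>x. f x \<bullet> (g x - g (x + e)))"
    unfolding inner_diff_right
    by (intro Sum_any_diff[symmetric] finite_support_dominated[OF g]
        finite_support_dominated[OF g_shift]) simp_all
  finally show ?thesis .
qed

lemma Sum_any_central_difference_inner:
  fixes f g :: "'a::group_add \<Rightarrow> 'b::real_inner"
  assumes g: "finite_support g"
  shows "Sum_any (\<lambda>x. (f (x + e) - f (x - e)) \<bullet> g x) = Sum_any (\<lambda>x. f x \<bullet> (g (x - e) - g (x + e)))"
proof -
  have g_shift: "finite_support (\<lambda>x. g (x + e))" "finite_support (\<lambda>x. g (x - e))"
    using finite_support_shift[OF g, of e] finite_support_shift[OF g, of "- e"] by simp_all
  have "Sum_any (\<lambda>x. (f (x + e) - f (x - e)) \<bullet> g x)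
      = Sum_any (\<lambda>x. f (x + e) \<bullet> g x) - Sum_any (\<lambda>x. f (x - e) \<bullet> g x)"
    unfolding inner_diff_left
    by (intro Sum_any_diff finite_support_dominated[OF g]) simp_all
  also have "Sum_any (\<lambda>x. f (x + e) \<bullet> g x) = Sum_any (\<lambda>x. f x \<bullet> g (x - e))"
    using Sum_any_shift[of "\<lambda>x. f x \<bullet> g (x - e)" e] by simp
  also have "Sum_any (\<lambda>x. f (x - e) \<bullet> g x) = Sum_any (\<lambda>x. f x \<bullet> g (x + e))"
    using Sum_any_shift[of "\<lambda>x. f (x - e) \<bullet> g x" e] by simp
  also have "Sum_any (\<lambda>x. f x \<bullet> g (x - e)) - \<dots> = Sum_any (\<lambda>x. f x \<bullet> (g (x - e) - g (x + e)))"
    unfolding inner_diff_right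
    by (intro Sum_any_diff[symmetric] finite_support_dominated[OF g_shift(1)]
        finite_support_dominated[OF g_shift(2)]) simp_all
  finally show ?thesis .
qed

lemma finite_support_Dc:
  assumes "finite_support f"
  shows "finite_support (Dc N \<alpha> f)"
proof -
  have "finite_support (\<lambda>p. f (p + axis \<alpha> 1) - f (p + - axis \<alpha> 1))"
    using assms by (intro finite_support_diff finite_support_shift)
  then show ?thesis by (rule finite_support_dominated) (simp add: Dc_def)
qed

lemma Sum_any_Dm_inner:
  fixes f g :: "int^3 \<Rightarrow> 'b::real_inner"
  assumes "finite_support g"
  shows "Sum_any (\<lambda>p. Dm N \<alpha> f p \<bullet> g p) = - Sum_any (\<lambda>p. f p \<bullet> Dp N \<alpha> g p)"
proof -
  let ?e = "axis \<alpha> 1" and ?c = "1 / meshsize N"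
  have "Sum_any (\<lambda>p. Dm N \<alpha> f p \<bullet> g p) = ?c * Sum_any (\<lambda>p. (f p - f (p - ?e)) \<bullet> g p)"
    unfolding Dm_def inner_scaleR_left by (rule Sum_any_cmult)
  also have "\<dots> = ?c * Sum_any (\<lambda>p. - (f p \<bullet> (g (p + ?e) - g p)))"
    unfolding Sum_any_backward_difference_inner[OF assms] by (simp add: inner_diff_right)
  also have "\<dots> = - Sum_any (\<lambda>p. f p \<bullet> Dp N \<alpha> g p)"
    unfolding Dp_def inner_scaleR_right Sum_any_cmult Sum_any_minus by simp
  finally show ?thesis .
qed

lemma Sum_any_Dc_inner:
  fixes f g :: "int^3 \<Rightarrow> 'b::real_inner"
  assumes "finite_support g"
  shows "Sum_any (\<lambda>p. Dc N \<alpha> f p \<bullet> g p) = - Sum_any (\<lambda>p. f p \<bullet> Dc N \<alpha> g p)"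
proof -
  let ?e = "axis \<alpha> 1" and ?c = "1 / (2 * meshsize N)"
  have "Sum_any (\<lambda>p. Dc N \<alpha> f p \<bullet> g p) = ?c * Sum_any (\<lambda>p. (f (p + ?e) - f (p - ?e)) \<bullet> g p)"
    unfolding Dc_def inner_scaleR_left by (rule Sum_any_cmult)
  also have "\<dots> = ?c * Sum_any (\<lambda>p. - (f p \<bullet> (g (p + ?e) - g (p - ?e))))"
    unfolding Sum_any_central_difference_inner[OF assms] by (simp add: inner_diff_right)
  also have "\<dots> = - Sum_any (\<lambda>p. f p \<bullet> Dc N \<alpha> g p)"
    unfolding Dc_def inner_scaleR_right Sum_any_cmult Sum_any_minus by simp
  finally show ?thesis .
qed

lemma frob_eq_inner: "frob A B = A \<bullet> B"
  by (simp add: frob_def inner_vec_def)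

lemma finite_vector:
  assumes "\<And>i. finite (B i)"
  shows "finite {v :: 'a^'n. \<forall>i. v $ i \<in> B i}"
proof -
  have "vec_nth ` {v. \<forall>i. v $ i \<in> B i} \<subseteq> Pi\<^sub>E UNIV B" by auto
  then have "finite (vec_nth ` {v :: 'a^'n. \<forall>i. v $ i \<in> B i})"
    using assms by (simp add: finite_PiE finite_subset)
  then show ?thesis by (rule finite_imageD) (simp add: inj_on_def vec_eq_iff)
qed

lemma finite_closed_pts: "finite (closed_pts N)"
  unfolding closed_pts_def using finite_vector[of "\<lambda>_. {0..int N + 1}"] by simp

lemma interior_pts_subset_closed_pts: "interior_pts N \<subseteq> closed_pts N"
  unfolding interior_pts_def closed_pts_def by (smt (verit) Collect_mono)

lemma Vspace_vanishes: "Q \<in> Vspace N \<Longrightarrow> p \<notin> interior_pts N \<Longrightarrow> Q p = 0"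
  by (simp add: Vspace_def bc_def)

lemma finite_support_Vspace:
  assumes "Q \<in> Vspace N"
  shows "finite_support Q"
proof -
  have "{p. Q p \<noteq> 0} \<subseteq> closed_pts N"
    using Vspace_vanishes[OF assms] interior_pts_subset_closed_pts by blast
  then show ?thesis unfolding finite_support_def using finite_closed_pts by (rule finite_subset)
qed

lemma ip_h_eq_Sum_any:
  assumes "\<And>p. p \<notin> interior_pts N \<Longrightarrow> B p = 0"
  shows "ip_h N A B = meshsize N ^ 3 * Sum_any (\<lambda>p. A p \<bullet> B p)"
proof -
  have "{p. A p \<bullet> B p \<noteq> 0} \<subseteq> closed_pts N"
    using assms interior_pts_subset_closed_pts by fastforce
  then show ?thesis
    unfolding ip_h_def frob_eq_inner by (simp add: Sum_any.expand_superset[OF finite_closed_pts])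
qed

lemma ip_h_commute: "ip_h N A B = ip_h N B A"
  by (simp add: ip_h_def frob_eq_inner inner_commute)

lemma Dc_component: "Dc N \<alpha> f p $ i = Dc N \<alpha> (\<lambda>q. f q $ i) p"
  by (simp add: Dc_def)

lemma Dc_sum: "Dc N \<alpha> (\<lambda>q. \<Sum>i\<in>I. f i q) p = (\<Sum>i\<in>I. Dc N \<alpha> (f i) p)"
  unfolding Dc_def sum_subtractf[symmetric] scaleR_sum_right ..

definition grad_h :: "nat \<Rightarrow> (int^3 \<Rightarrow> 'a::real_vector) \<Rightarrow> int^3 \<Rightarrow> 'a^3" where
  "grad_h N u p = (\<chi> w. Dc N w u p)"

definition div_h :: "nat \<Rightarrow> gridfun \<Rightarrow> int^3 \<Rightarrow> real^3" where
  "div_h N Q p = (\<chi> s. \<Sum>\<beta>\<in>UNIV. Dc N \<beta> (\<lambda>q. Q q $ s $ \<beta>) p)"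

lemma alpha_h_eq_grad_div_h:
  fixes N :: nat and Q :: gridfun and p :: "int^3"
  defines "G \<equiv> grad_h N (div_h N Q) p"
  shows "alpha_h N Q p = G + transpose G - (2 / 3 * trace G) *\<^sub>R mat 1"
  unfolding G_def
  by (simp add: vec_eq_iff alpha_h_def grad_h_def div_h_def transpose_def trace_def mat_def
      Dc_component Dc_sum sum.distrib)

lemma inner_symmetric_traceless:
  fixes G B :: "real^'n^'n"
  assumes "transpose B = B" and "trace B = 0"
  shows "(G + transpose G - c *\<^sub>R mat 1) \<bullet> B = 2 * (G \<bullet> B)"
proof -
  have "transpose G \<bullet> B = G \<bullet> transpose B"
    by (simp add: inner_vec_def transpose_def) (rule sum.swap)
  moreover have "mat 1 \<bullet> B = trace B"
  proof -
    have row: "mat 1 $ i = axis i 1" for i :: 'n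
      by (simp add: mat_def axis_def vec_eq_iff eq_commute)
    show ?thesis unfolding inner_vec_def[of "mat 1"] row by (simp add: trace_def inner_axis')
  qed
  ultimately show ?thesis
    using assms by (simp add: inner_add_left inner_diff_left)
qed

lemma Sum_any_grad_h_inner:
  fixes u :: "int^3 \<Rightarrow> 'b::real_inner" and B :: "int^3 \<Rightarrow> 'b^3"
  assumes B: "finite_support B"
  shows "Sum_any (\<lambda>p. grad_h N u p \<bullet> B p)
       = - Sum_any (\<lambda>p. u p \<bullet> (\<Sum>w\<in>UNIV. Dc N w (\<lambda>q. B q $ w) p))"
proof -
  have B_row: "finite_support (\<lambda>q. B q $ w)" for w
    using B by (rule finite_support_dominated) simp
  have "Sum_any (\<lambda>p. grad_h N u p \<bullet> B p) = Sum_any (\<lambda>p. \<Sum>w\<in>UNIV. Dc N w u p \<bullet> B p $ w)"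
    by (simp add: grad_h_def inner_vec_def)
  also have "\<dots> = (\<Sum>w\<in>UNIV. Sum_any (\<lambda>p. Dc N w u p \<bullet> B p $ w))"
  proof (rule Sum_any_sum)
    show "finite_support (\<lambda>p. Dc N w u p \<bullet> B p $ w)" for w
      using B_row[of w] by (rule finite_support_dominated) simp
  qed simp
  also have "\<dots> = (\<Sum>w\<in>UNIV. - Sum_any (\<lambda>p. u p \<bullet> Dc N w (\<lambda>q. B q $ w) p))"
    using Sum_any_Dc_inner[OF B_row] by simp
  also have "\<dots> = - Sum_any (\<lambda>p. \<Sum>w\<in>UNIV. u p \<bullet> Dc N w (\<lambda>q. B q $ w) p)"
  proof (subst Sum_any_sum)
    show "finite_support (\<lambda>p. u p \<bullet> Dc N w (\<lambda>q. B q $ w) p)" for w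
      using finite_support_Dc[where N = N and \<alpha> = w, OF B_row[of w]]
      by (rule finite_support_dominated) simp
  qed (simp_all add: sum_negf)
  finally show ?thesis by (simp only: inner_sum_right)
qed

lemma div_h_symmetric:
  assumes "\<And>q. symm (B q)"
  shows "(\<Sum>w\<in>UNIV. Dc N w (\<lambda>q. B q $ w) p) = div_h N B p"
proof -
  have "B q $ w $ s = transpose (B q) $ w $ s" for q w s
    using assms[of q] by (simp add: symm_def)
  then have entry: "(\<lambda>q. B q $ w $ s) = (\<lambda>q. B q $ s $ w)" for w s
    by (simp add: transpose_def)
  have "(\<Sum>w\<in>UNIV. Dc N w (\<lambda>q. B q $ w) p) $ s = div_h N B p $ s" for s
  proof -
    have "(\<Sum>w\<in>UNIV. Dc N w (\<lambda>q. B q $ w) p) $ s = (\<Sum>w\<in>UNIV. Dc N w (\<lambda>q. B q $ w $ s) p)"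
      by (simp add: sum_component Dc_component)
    also have "\<dots> = (\<Sum>w\<in>UNIV. Dc N w (\<lambda>q. B q $ s $ w) p)"
      by (simp only: entry)
    finally show ?thesis by (simp add: div_h_def)
  qed
  then show ?thesis by (simp add: vec_eq_iff)
qed

lemma Sum_any_alpha_h_inner:
  assumes "Q2 \<in> Vspace N"
  shows "Sum_any (\<lambda>p. alpha_h N Q1 p \<bullet> Q2 p) = - 2 * Sum_any (\<lambda>p. div_h N Q1 p \<bullet> div_h N Q2 p)"
proof -
  have symm: "\<And>q. symm (Q2 q)" and traceless: "\<And>q. trace (Q2 q) = 0"
    using assms by (simp_all add: Vspace_def)
  have "alpha_h N Q1 p \<bullet> Q2 p = 2 * (grad_h N (div_h N Q1) p \<bullet> Q2 p)" for p
    unfolding alpha_h_eq_grad_div_h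
    by (rule inner_symmetric_traceless) (use symm[of p] traceless[of p] in \<open>simp_all add: symm_def\<close>)
  then have "Sum_any (\<lambda>p. alpha_h N Q1 p \<bullet> Q2 p)
      = Sum_any (\<lambda>p. 2 * (grad_h N (div_h N Q1) p \<bullet> Q2 p))"
    by simp
  also have "\<dots> = 2 * Sum_any (\<lambda>p. grad_h N (div_h N Q1) p \<bullet> Q2 p)"
    by (rule Sum_any_cmult)
  also have "\<dots> = - 2 * Sum_any (\<lambda>p. div_h N Q1 p \<bullet> div_h N Q2 p)"
    unfolding Sum_any_grad_h_inner[OF finite_support_Vspace[OF assms]] div_h_symmetric[OF symm]
    by simp
  finally show ?thesis .
qed

lemma Sum_any_lap_h_inner:
  assumes Q2: "finite_support Q2"
  shows "Sum_any (\<lambda>p. lap_h N Q1 p \<bullet> Q2 p)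
       = - (\<Sum>\<alpha>\<in>UNIV. Sum_any (\<lambda>p. Dp N \<alpha> Q1 p \<bullet> Dp N \<alpha> Q2 p))"
proof -
  have "Sum_any (\<lambda>p. lap_h N Q1 p \<bullet> Q2 p) = Sum_any (\<lambda>p. \<Sum>\<alpha>\<in>UNIV. Dm N \<alpha> (Dp N \<alpha> Q1) p \<bullet> Q2 p)"
    by (simp add: lap_h_def inner_sum_left)
  also have "\<dots> = (\<Sum>\<alpha>\<in>UNIV. Sum_any (\<lambda>p. Dm N \<alpha> (Dp N \<alpha> Q1) p \<bullet> Q2 p))"
  proof (rule Sum_any_sum)
    show "finite_support (\<lambda>p. Dm N \<alpha> (Dp N \<alpha> Q1) p \<bullet> Q2 p)" for \<alpha>
      using Q2 by (rule finite_support_dominated) simp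
  qed simp
  also have "\<dots> = (\<Sum>\<alpha>\<in>UNIV. - Sum_any (\<lambda>p. Dp N \<alpha> Q1 p \<bullet> Dp N \<alpha> Q2 p))"
    by (simp only: Sum_any_Dm_inner[OF Q2])
  finally show ?thesis by (simp only: sum_negf)
qed

lemma ip_h_opA:
  fixes a b c A0 :: real and Qn Qnm1 :: gridfun
  assumes Q2: "Q2 \<in> Vspace N"
  defines "P \<equiv> Pbar a b c A0 Qn Qnm1"
  shows "ip_h N (opA a b c A0 L1 L2 L3 M dt N Qn Qnm1 Q1) Q2 = meshsize N ^ 3 *
     (1 / dt * Sum_any (\<lambda>p. Q1 p \<bullet> Q2 p)
      + M * L1 / 2 * (\<Sum>\<alpha>\<in>UNIV. Sum_any (\<lambda>p. Dp N \<alpha> Q1 p \<bullet> Dp N \<alpha> Q2 p))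
      + M / 2 * Sum_any (\<lambda>p. (P p \<bullet> Q1 p) * (P p \<bullet> Q2 p))
      + M * (L2 + L3) / 2 * Sum_any (\<lambda>p. div_h N Q1 p \<bullet> div_h N Q2 p))"
proof -
  have fs: "finite_support Q2" by (rule finite_support_Vspace[OF Q2])
  have pointwise: "opA a b c A0 L1 L2 L3 M dt N Qn Qnm1 Q1 p \<bullet> Q2 p =
      1 / dt * (Q1 p \<bullet> Q2 p) - M * L1 / 2 * (lap_h N Q1 p \<bullet> Q2 p)
      + M / 2 * ((P p \<bullet> Q1 p) * (P p \<bullet> Q2 p)) - M * (L2 + L3) / 4 * (alpha_h N Q1 p \<bullet> Q2 p)" for p
    by (simp add: opA_def P_def Let_def frob_eq_inner inner_add_left inner_diff_left)
  have "Sum_any (\<lambda>p. opA a b c A0 L1 L2 L3 M dt N Qn Qnm1 Q1 p \<bullet> Q2 p) =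
      1 / dt * Sum_any (\<lambda>p. Q1 p \<bullet> Q2 p) - M * L1 / 2 * Sum_any (\<lambda>p. lap_h N Q1 p \<bullet> Q2 p)
      + M / 2 * Sum_any (\<lambda>p. (P p \<bullet> Q1 p) * (P p \<bullet> Q2 p))
      - M * (L2 + L3) / 4 * Sum_any (\<lambda>p. alpha_h N Q1 p \<bullet> Q2 p)"
    unfolding pointwise
    by (simp add: Sum_any_eq_sum_support[OF fs] sum.distrib sum_subtractf sum_distrib_left
        sum_divide_distrib)
  also have "\<dots> =
     1 / dt * Sum_any (\<lambda>p. Q1 p \<bullet> Q2 p)
      + M * L1 / 2 * (\<Sum>\<alpha>\<in>UNIV. Sum_any (\<lambda>p. Dp N \<alpha> Q1 p \<bullet> Dp N \<alpha> Q2 p))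
      + M / 2 * Sum_any (\<lambda>p. (P p \<bullet> Q1 p) * (P p \<bullet> Q2 p))
      + M * (L2 + L3) / 2 * Sum_any (\<lambda>p. div_h N Q1 p \<bullet> div_h N Q2 p)"
    unfolding Sum_any_lap_h_inner[OF fs] Sum_any_alpha_h_inner[OF Q2] by simp
  finally show ?thesis
    using ip_h_eq_Sum_any[OF Vspace_vanishes[OF Q2]] by simp
qed

theorem theorem4p5:
  fixes a b c L1 L2 L3 M dt A0 :: real and N :: nat and Qn Qnm1 :: gridfun
  assumes "c > 0" "L1 > 0" "L2 > 0" "L3 > 0" "M > 0" "dt > 0" "A0 > 0"
    and "Inf {bulk_energy a b c A0 Q | Q. symm Q} > 0"
    and "Qn \<in> Vspace N" and "Qnm1 \<in> Vspace N"
  shows "(\<forall>Q1\<in>Vspace N. \<forall>Q2\<in>Vspace N.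
            ip_h N (opA a b c A0 L1 L2 L3 M dt N Qn Qnm1 Q1) Q2
          = ip_h N Q1 (opA a b c A0 L1 L2 L3 M dt N Qn Qnm1 Q2))
      \<and> (\<forall>Q\<in>Vspace N. Q \<noteq> (\<lambda>_. 0) \<longrightarrow>
            ip_h N (opA a b c A0 L1 L2 L3 M dt N Qn Qnm1 Q) Q > 0)"
proof (intro conjI ballI impI)
  fix Q1 Q2 assume "Q1 \<in> Vspace N" and "Q2 \<in> Vspace N"
  then show "ip_h N (opA a b c A0 L1 L2 L3 M dt N Qn Qnm1 Q1) Q2
           = ip_h N Q1 (opA a b c A0 L1 L2 L3 M dt N Qn Qnm1 Q2)"
    by (simp add: ip_h_commute[of N Q1] ip_h_opA inner_commute mult.commute)
next
  fix Q assume Q: "Q \<in> Vspace N" and "Q \<noteq> (\<lambda>_. 0)"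
  then have "0 < Sum_any (\<lambda>p. Q p \<bullet> Q p)"
    by (intro Sum_any_inner_self_pos finite_support_Vspace)
  moreover have "0 \<le> Sum_any (\<lambda>p. Dp N \<alpha> Q p \<bullet> Dp N \<alpha> Q p)" for \<alpha>
    by (rule Sum_any_nonneg) simp
  moreover have "0 \<le> Sum_any (\<lambda>p. (P p \<bullet> Q p) * (P p \<bullet> Q p))" for P :: gridfun
    by (rule Sum_any_nonneg) simp
  moreover have "0 \<le> Sum_any (\<lambda>p. div_h N Q p \<bullet> div_h N Q p)"
    by (rule Sum_any_nonneg) simp
  ultimately show "0 < ip_h N (opA a b c A0 L1 L2 L3 M dt N Qn Qnm1 Q) Q"
    unfolding ip_h_opA[OF Q] using assms
    by (intro mult_pos_pos add_pos_nonneg mult_nonneg_nonneg sum_nonneg) (auto simp: meshsize_def)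
qed

end
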